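(* Let $a$ be an algebraic element of a ring $K$. (1) The minimal polynomial $f(x)$ of $a$ is unique; moreover, for every $g\in\mathbb{Z}[x]$ with $g(0)=0$ and $g(a)=0$ there exist a positive integer $k$ and $h\in\mathbb{Z}[x]$ such that $k\,g(x)=f(x)h(x)$ and $k$ divides every coefficient of $f$. (2) If $l\,\tilde f(a)=0$ for some positive integer $l$ and some monic $\tilde f\in\mathbb{Z}[x]$ with $\tilde f(0)=0$, then the minimal polynomial of $a$ has the form $f(x)=d\,f^*(x)$ with $d$ a positive integer and $f^*\in\mathbb{Z}[x]$ monic with $f^*(0)=0$.
   Context: Rings are associative and not necessarily unital. An element $a\in K$ is algebraic if $g(a)=0$ for some nonzero $g\in\mathbb{Z}[x]$ with $g(0)=0$. The minimal polynomial of an algebraic element $a$ is a polynomial $f\in\mathbb{Z}[x]$ with $f(0)=0$ and $f(a)=0$ that has the smallest possible degree among nonzero such polynomials and, among those of that degree, the smallest positive leading coefficient. *)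

theory Defs
  imports "HOL-Computational_Algebra.Polynomial"
begin

text \<open>Rings are associative but not necessarily unital: we use the type class ring
  (abelian group under +, associative multiplication, distributive laws), which has no 1.\<close>

definition zsmul :: "int \<Rightarrow> 'a::ab_group_add \<Rightarrow> 'a" where
  "zsmul k x = (if 0 \<le> k then (\<Sum>_<nat k. x) else - (\<Sum>_<nat (- k). x))"

text \<open>Positive powers a^n (n >= 1) in a non-unital ring; the value at n = 0 is
  irrelevant (only used with n >= 1) and set to 0.\<close>
fun ppow :: "'a::ring \<Rightarrow> nat \<Rightarrow> 'a" where
  "ppow a 0 = 0"
| "ppow a (Suc 0) = a"
| "ppow a (Suc (Suc n)) = ppow a (Suc n) * a"

definition eval0 :: "int poly \<Rightarrow> 'a::ring \<Rightarrow> 'a" where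
  "eval0 g a = (\<Sum>i\<in>{1..degree g}. zsmul (coeff g i) (ppow a i))"

definition annihilates :: "int poly \<Rightarrow> 'a::ring \<Rightarrow> bool" where
  "annihilates g a \<longleftrightarrow> coeff g 0 = 0 \<and> eval0 g a = 0"

definition algebraic_elem :: "'a::ring \<Rightarrow> bool" where
  "algebraic_elem a \<longleftrightarrow> (\<exists>g. g \<noteq> 0 \<and> annihilates g a)"

definition is_min_poly :: "'a::ring \<Rightarrow> int poly \<Rightarrow> bool" where
  "is_min_poly a f \<longleftrightarrow>
     f \<noteq> 0 \<and> annihilates f a \<and> lead_coeff f > 0 \<and>
     (\<forall>g. g \<noteq> 0 \<and> annihilates g a \<longrightarrow> degree f \<le> degree g) \<and>
     (\<forall>g. g \<noteq> 0 \<and> annihilates g a \<and> degree g = degree f \<and> lead_coeff g > 0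
          \<longrightarrow> lead_coeff f \<le> lead_coeff g)"

end

theory Submission
  imports Defs
begin

text \<open>The polynomials \<open>g\<close> with \<open>g(0) = 0\<close> and \<open>g(a) = 0\<close> form an ideal of \<open>\<int>[x]\<close>, since
  \<open>(x q)(a) = q(a) a\<close> whenever \<open>q(0) = 0\<close>.  Pseudo-dividing such a \<open>g\<close> by the minimal
  polynomial \<open>f\<close> leaves a remainder in the ideal of degree below \<open>deg f\<close>, hence zero; so
  \<open>f\<close> divides \<open>c g\<close> for some \<open>c \<noteq> 0\<close>, and by Gauss's lemma the primitive part of \<open>f\<close>
  divides \<open>g\<close>.  This gives \<open>content f \<cdot> g = f h\<close>; applied to \<open>g = l f'\<close> with \<open>f'\<close> monic it
  shows that the primitive part of \<open>f\<close> divides \<open>f'\<close> and is therefore monic.  Two minimal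
  polynomials share degree and leading coefficient, so their difference lies in the ideal
  and has smaller degree, which proves uniqueness.\<close>

definition nsmul :: "nat \<Rightarrow> 'a::ab_group_add \<Rightarrow> 'a" where
  "nsmul n x = (\<Sum>_<n. x)"

lemma nsmul_0 [simp]: "nsmul 0 x = 0"
  by (simp add: nsmul_def)

lemma nsmul_zero [simp]: "nsmul n 0 = 0"
  by (simp add: nsmul_def)

lemma nsmul_Suc: "nsmul (Suc n) x = nsmul n x + x"
  by (simp add: nsmul_def)

lemma nsmul_add_left: "nsmul (m + n) x = nsmul m x + nsmul n x"
  by (induct n) (simp_all add: nsmul_Suc algebra_simps)

lemma nsmul_mult: "nsmul (m * n) x = nsmul m (nsmul n x)"
  by (induct m) (simp_all add: nsmul_Suc nsmul_add_left algebra_simps)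

lemma nsmul_diff_right: "nsmul n (x - y) = nsmul n x - nsmul n y"
  by (simp add: nsmul_def sum_subtractf)

lemma nsmul_mult_right: "nsmul n (x * y) = nsmul n x * (y::'a::ring)"
  by (simp add: nsmul_def sum_distrib_right)

lemma nsmul_sum: "nsmul n (sum f A) = (\<Sum>i\<in>A. nsmul n (f i))"
  unfolding nsmul_def by (rule sum.swap)

lemma zsmul_eq_nsmul_diff: "zsmul k x = nsmul (nat k) x - nsmul (nat (- k)) x"
  by (simp add: zsmul_def nsmul_def)

lemma zsmul_of_nat_diff: "zsmul (int p - int q) x = nsmul p x - nsmul q x"
proof (cases "q \<le> p")
  case True
  then have "nsmul p x = nsmul (p - q) x + nsmul q x"
    using nsmul_add_left[of "p - q" q x] by simp
  with True show ?thesis by (simp add: zsmul_eq_nsmul_diff nat_diff_distrib)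
next
  case False
  then have "nsmul q x = nsmul (q - p) x + nsmul p x"
    using nsmul_add_left[of "q - p" p x] by simp
  moreover have "nat (int p - int q) = 0" "nat (- (int p - int q)) = q - p"
    using False by simp_all
  ultimately show ?thesis by (simp add: zsmul_eq_nsmul_diff)
qed

lemma int_diff_of_nat_cases:
  obtains p q where "k = int p - int q"
  by (rule that[of "nat k" "nat (- k)"]) simp

lemma zsmul_add_left: "zsmul (k + m) x = zsmul k x + zsmul m x"
proof -
  obtain p1 q1 p2 q2 where k: "k = int p1 - int q1" and m: "m = int p2 - int q2"
    by (meson int_diff_of_nat_cases)
  have "k + m = int (p1 + p2) - int (q1 + q2)"
    unfolding k m by simp
  moreover have "zsmul k x + zsmul m x = nsmul (p1 + p2) x - nsmul (q1 + q2) x"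
    unfolding k m zsmul_of_nat_diff nsmul_add_left by (simp add: algebra_simps)
  ultimately show ?thesis
    by (simp only: zsmul_of_nat_diff)
qed

lemma zsmul_mult: "zsmul (k * m) x = zsmul k (zsmul m x)"
proof -
  obtain p1 q1 p2 q2 where k: "k = int p1 - int q1" and m: "m = int p2 - int q2"
    by (meson int_diff_of_nat_cases)
  have "k * m = int (p1 * p2 + q1 * q2) - int (p1 * q2 + q1 * p2)"
    unfolding k m by (simp add: algebra_simps)
  moreover have "zsmul k (zsmul m x) = nsmul (p1 * p2 + q1 * q2) x - nsmul (p1 * q2 + q1 * p2) x"
    unfolding k m zsmul_of_nat_diff nsmul_diff_right nsmul_add_left nsmul_mult
    by (simp add: algebra_simps)
  ultimately show ?thesis
    by (simp only: zsmul_of_nat_diff)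
qed

lemma zsmul_0_left [simp]: "zsmul 0 x = 0"
  by (simp add: zsmul_def)

lemma zsmul_zero [simp]: "zsmul k 0 = 0"
  by (simp add: zsmul_eq_nsmul_diff)

lemma zsmul_uminus_left: "zsmul (- k) x = - zsmul k x"
  using zsmul_add_left[of k "- k" x] by (simp add: zsmul_def eq_neg_iff_add_eq_0 add.commute)

lemma zsmul_mult_right: "zsmul k (x * y) = zsmul k x * (y::'a::ring)"
  by (simp add: zsmul_eq_nsmul_diff nsmul_mult_right left_diff_distrib)

lemma zsmul_sum: "zsmul k (sum f A) = (\<Sum>i\<in>A. zsmul k (f i))"
  by (simp add: zsmul_eq_nsmul_diff nsmul_sum sum_subtractf)

lemma ppow_Suc: "n \<ge> 1 \<Longrightarrow> ppow a (Suc n) = ppow a n * a"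
  by (cases n) auto

lemma eval0_eq_sum_atMost:
  assumes "degree p \<le> n"
  shows "eval0 p a = (\<Sum>i\<in>{1..n}. zsmul (coeff p i) (ppow a i))"
  unfolding eval0_def using assms
  by (intro sum.mono_neutral_left) (auto simp: coeff_eq_0)

lemma eval0_0 [simp]: "eval0 0 a = 0"
  by (simp add: eval0_def)

lemma eval0_add: "eval0 (p + q) a = eval0 p a + eval0 q a"
proof -
  let ?n = "max (degree p) (degree q)"
  have "degree (p + q) \<le> ?n"
    by (rule degree_add_le_max)
  then show ?thesis
    by (simp add: eval0_eq_sum_atMost[of _ ?n] zsmul_add_left sum.distrib)
qed

lemma eval0_uminus: "eval0 (- p) a = - eval0 p a"
  by (simp add: eval0_def zsmul_uminus_left sum_negf)

lemma eval0_diff: "eval0 (p - q) a = eval0 p a - eval0 q a"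
  by (simp only: diff_conv_add_uminus eval0_add eval0_uminus)

lemma eval0_smult: "eval0 (smult c p) a = zsmul c (eval0 p a)"
  by (simp add: eval0_eq_sum_atMost[of _ "degree p"] degree_smult_le zsmul_mult zsmul_sum)

lemma eval0_pCons_0:
  assumes "coeff p 0 = 0"
  shows "eval0 (pCons 0 p) a = eval0 p a * a"
proof -
  let ?n = "degree p"
  have "eval0 (pCons 0 p) a = (\<Sum>i\<in>{1..Suc ?n}. zsmul (coeff (pCons 0 p) i) (ppow a i))"
    by (rule eval0_eq_sum_atMost) (simp add: degree_pCons_le)
  also have "\<dots> = (\<Sum>i\<in>{0..?n}. zsmul (coeff p i) (ppow a (Suc i)))"
    by (simp only: One_nat_def sum.atLeast_Suc_atMost_Suc_shift) simp
  also have "\<dots> = (\<Sum>i\<in>{1..?n}. zsmul (coeff p i) (ppow a (Suc i)))"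
    using assms by (subst sum.atLeast_Suc_atMost) auto
  also have "\<dots> = (\<Sum>i\<in>{1..?n}. zsmul (coeff p i) (ppow a i) * a)"
    by (intro sum.cong) (auto simp: ppow_Suc zsmul_mult_right)
  also have "\<dots> = eval0 p a * a"
    by (simp add: eval0_def sum_distrib_right)
  finally show ?thesis .
qed

lemma annihilates_diff: "annihilates p a \<Longrightarrow> annihilates q a \<Longrightarrow> annihilates (p - q) a"
  by (simp add: annihilates_def eval0_diff)

lemma annihilates_uminus: "annihilates p a \<Longrightarrow> annihilates (- p) a"
  by (simp add: annihilates_def eval0_uminus)

lemma annihilates_smult: "annihilates p a \<Longrightarrow> annihilates (smult c p) a"
  by (simp add: annihilates_def eval0_smult)

lemma annihilates_mult:
  assumes "annihilates f a"
  shows "annihilates (f * q) a"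
proof (induct q rule: pCons_induct)
  case (pCons c q)
  have "f * pCons c q = smult c f + pCons 0 (f * q)"
    by simp
  with assms pCons show ?case
    by (simp add: annihilates_def eval0_add eval0_smult eval0_pCons_0 coeff_mult_0)
qed (simp add: annihilates_def)

lemma content_pos: "p \<noteq> 0 \<Longrightarrow> content (p :: int poly) > 0"
  by (metis abs_ge_zero content_eq_zero_iff le_less normalize_content normalize_int_def)

lemma primitive_part_dvd: "primitive_part (p :: int poly) dvd p"
  by (metis content_times_primitive_part dvd_refl dvd_smult)

lemma primitive_dvd_smult_cancel:
  fixes p q :: "int poly"
  assumes "content p = 1" and "c \<noteq> 0" and "p dvd smult c q"
  shows "p dvd q"
proof -
  have "primitive_part p dvd primitive_part (smult c q)"
    using assms(3) by (rule primitive_part_dvd_primitive_partI)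
  then have "p dvd smult (unit_factor c) (primitive_part q)"
    by (simp add: primitive_part_prim[OF assms(1)] primitive_part_smult)
  moreover have "unit_factor c = 1 \<or> unit_factor c = -1"
    using \<open>c \<noteq> 0\<close> by (auto simp: unit_factor_int_def sgn_if)
  ultimately have "p dvd primitive_part q"
    by auto
  then show ?thesis
    by (rule dvd_trans) (rule primitive_part_dvd)
qed

lemma coeff_0_primitive_part:
  assumes "coeff p 0 = 0"
  shows "coeff (primitive_part (p :: int poly)) 0 = 0"
proof (cases "p = 0")
  case False
  have "content p * coeff (primitive_part p) 0 = 0"
    using assms by (metis coeff_smult content_times_primitive_part)
  with False show ?thesis
    by simp
qed simp

lemma min_poly_degree_le: "is_min_poly a f \<Longrightarrow> annihilates g a \<Longrightarrow> g \<noteq> 0 \<Longrightarrow> degree f \<le> degree g"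
  by (simp add: is_min_poly_def)

lemma min_poly_exists:
  assumes "algebraic_elem a"
  shows "\<exists>f. is_min_poly a f"
proof -
  let ?ann = "\<lambda>g. g \<noteq> 0 \<and> annihilates g a"
  obtain g where "?ann g"
    using assms by (auto simp: algebraic_elem_def)
  then obtain g where g: "?ann g" and g_min: "\<And>h. ?ann h \<Longrightarrow> degree g \<le> degree h"
    using ex_has_least_nat[of ?ann g degree] by blast
  let ?cand = "\<lambda>h. ?ann h \<and> degree h = degree g \<and> lead_coeff h > 0"
  have "lead_coeff g > 0 \<or> lead_coeff g < 0"
    using g leading_coeff_neq_0[of g] by linarith
  then have "?cand (if lead_coeff g > 0 then g else - g)"
    using g by (auto simp: annihilates_uminus)
  then obtain f where f: "?cand f" and f_min: "\<And>h. ?cand h \<Longrightarrow> nat (lead_coeff f) \<le> nat (lead_coeff h)"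
    using ex_has_least_nat[of ?cand _ "\<lambda>h. nat (lead_coeff h)"] by blast
  have "is_min_poly a f"
    unfolding is_min_poly_def using f g_min f_min by force
  then show ?thesis ..
qed

lemma min_poly_unique:
  assumes f: "is_min_poly a f" and f': "is_min_poly a f'"
  shows "f' = f"
proof (rule ccontr)
  assume "f' \<noteq> f"
  have deg: "degree f' = degree f"
    using f f' by (intro antisym min_poly_degree_le) (auto simp: is_min_poly_def)
  moreover have "lead_coeff f' = lead_coeff f"
    using f f' deg by (simp add: is_min_poly_def antisym)
  ultimately have "coeff (f' - f) (degree f) = 0"
    by simp
  moreover have "degree (f' - f) \<le> degree f"
    using degree_diff_le_max[of f' f] deg by simp
  moreover have "degree f \<le> degree (f' - f)"
    using f f' \<open>f' \<noteq> f\<close> by (intro min_poly_degree_le annihilates_diff) (auto simp: is_min_poly_def)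
  ultimately have "lead_coeff (f' - f) = 0"
    by (simp add: le_antisym)
  then have "f' - f = 0"
    by (simp only: leading_coeff_0_iff)
  with \<open>f' \<noteq> f\<close> show False
    by simp
qed

lemma min_poly_primitive_part_dvd:
  assumes f: "is_min_poly a f" and g: "annihilates g a"
  shows "primitive_part f dvd g"
proof -
  have "f \<noteq> 0" and fa: "annihilates f a"
    using f by (auto simp: is_min_poly_def)
  define r where "r = pseudo_mod g f"
  obtain c q where "c \<noteq> 0" and div: "smult c g = f * q + r"
    using pseudo_mod(1)[OF \<open>f \<noteq> 0\<close>, of g] unfolding r_def by blast
  have "r = smult c g - f * q"
    using div by simp
  then have "annihilates r a"
    using annihilates_diff[OF annihilates_smult[OF g] annihilates_mult[OF fa]] by simp
  moreover have "r = 0 \<or> degree r < degree f"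
    using pseudo_mod(2)[OF \<open>f \<noteq> 0\<close>] unfolding r_def .
  ultimately have "r = 0"
    using min_poly_degree_le[OF f] by fastforce
  then have "f dvd smult c g"
    using div by simp
  then have "primitive_part f dvd smult c g"
    by (rule dvd_trans[OF primitive_part_dvd])
  then show ?thesis
    by (rule primitive_dvd_smult_cancel[OF content_primitive_part[OF \<open>f \<noteq> 0\<close>] \<open>c \<noteq> 0\<close>])
qed

lemma min_poly_dvd_content_smult:
  assumes f: "is_min_poly a f" and g: "annihilates g a"
  shows "\<exists>h. smult (content f) g = f * h"
proof -
  obtain h where "g = primitive_part f * h"
    using min_poly_primitive_part_dvd[OF f g] by (rule dvdE)
  then have "smult (content f) g = f * h"
    by (metis content_times_primitive_part mult_smult_left)
  then show ?thesis ..
qed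

lemma min_poly_primitive_part_monic:
  assumes f: "is_min_poly a f" and "l \<noteq> 0" and ft: "lead_coeff ft = 1"
    and "coeff ft 0 = 0" and "zsmul l (eval0 ft a) = 0"
  shows "lead_coeff (primitive_part f) = 1"
proof -
  have "f \<noteq> 0"
    using f by (simp add: is_min_poly_def)
  have "annihilates (smult l ft) a"
    using assms by (simp add: annihilates_def eval0_smult)
  then have "primitive_part f dvd smult l ft"
    by (rule min_poly_primitive_part_dvd[OF f])
  then have "primitive_part f dvd ft"
    by (rule primitive_dvd_smult_cancel[OF content_primitive_part[OF \<open>f \<noteq> 0\<close>] \<open>l \<noteq> 0\<close>])
  then obtain h where "ft = primitive_part f * h" ..
  then have "lead_coeff (primitive_part f) * lead_coeff h = 1"
    using ft by (simp add: lead_coeff_mult)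
  then have "lead_coeff (primitive_part f) = 1 \<or> lead_coeff (primitive_part f) = -1"
    using zmult_eq_1_iff by blast
  moreover have "lead_coeff f = content f * lead_coeff (primitive_part f)"
    by (metis content_times_primitive_part lead_coeff_smult)
  moreover have "lead_coeff f > 0" and "content f > 0"
    using f content_pos by (auto simp: is_min_poly_def)
  ultimately show ?thesis
    by (auto simp: zero_less_mult_iff)
qed

theorem proposition1:
  fixes a :: "'a::ring"
  assumes "algebraic_elem a"
  shows "(\<exists>!f. is_min_poly a f)
     \<and> (\<forall>f g. is_min_poly a f \<and> annihilates g a \<longrightarrow>
           (\<exists>k::int. \<exists>h. k > 0 \<and> smult k g = f * h \<and> (\<forall>i. k dvd coeff f i)))
     \<and> (\<forall>l::int. \<forall>ft. l > 0 \<and> lead_coeff ft = 1 \<and> coeff ft 0 = 0 \<and> zsmul l (eval0 ft a) = 0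
           \<longrightarrow> (\<forall>f. is_min_poly a f \<longrightarrow>
                 (\<exists>d::int. \<exists>fs. d > 0 \<and> lead_coeff fs = 1 \<and> coeff fs 0 = 0 \<and> f = smult d fs)))"
proof (intro conjI allI impI)
  show "\<exists>!f. is_min_poly a f"
    using min_poly_exists[OF assms] min_poly_unique by blast
next
  fix f g
  assume fg: "is_min_poly a f \<and> annihilates g a"
  then obtain h where "smult (content f) g = f * h"
    using min_poly_dvd_content_smult by blast
  moreover have "content f > 0"
    using fg content_pos by (simp add: is_min_poly_def)
  ultimately show "\<exists>k::int. \<exists>h. k > 0 \<and> smult k g = f * h \<and> (\<forall>i. k dvd coeff f i)"
    using content_dvd_coeff by blast
next
  fix l :: int and ft f
  assume ft: "l > 0 \<and> lead_coeff ft = 1 \<and> coeff ft 0 = 0 \<and> zsmul l (eval0 ft a) = 0"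
    and f: "is_min_poly a f"
  then have "lead_coeff (primitive_part f) = 1"
    by (intro min_poly_primitive_part_monic[of a f l ft]) auto
  moreover have "coeff (primitive_part f) 0 = 0"
    using f by (intro coeff_0_primitive_part) (simp add: is_min_poly_def annihilates_def)
  moreover have "content f > 0"
    using f content_pos by (simp add: is_min_poly_def)
  ultimately show "\<exists>d::int. \<exists>fs. d > 0 \<and> lead_coeff fs = 1 \<and> coeff fs 0 = 0 \<and> f = smult d fs"
    using content_times_primitive_part[of f, symmetric] by blast
qed

end
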